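(* Over the class of serial models (models in which every world has at least one $R$-successor): (1) the formula $[\ddagger^{\ast}(p\land q)](\lnot\Box p\land\lnot\Box q)$ is true at every world of every serial model; but (2) the formula $[\ddagger(p\land q)](\lnot\Box p\land\lnot\Box q)$ is not true at every world of every serial model. Here $p,q$ are distinct atoms.
   Context: Fix a countable non-empty set $\mathit{At}$ of atoms. Formulas are built from $\top$, atoms, $\lnot$, $\land$, $\Box$ and, for propositional $\pi$, operators $[\ddagger\pi]$ and $[\ddagger^{\ast}\pi]$. A model is $\mathcal{M}=\langle W,R,V\rangle$, $W\neq\varnothing$, $R\subseteq W\times W$, $V:\mathit{At}\to\mathcal{P}(W)$, standard Kripke semantics for $\Box$. A literal is an atom or its negation; a clause is a finite set $D$ of literals read as $\bigvee D$ ($\bigvee\varnothing:=\bot$), tautological if it contains $p$ and $\lnot p$ for some $p$. For propositional $\pi$, $\mathcal{C}(\pi)$ is the set of non-tautological clauses $D$ with $\models\pi\to\bigvee D$ and no $D'\subsetneq D$ with $\models\pi\to\bigvee D'$. For a model $\mathcal{M}$ and a finite family $(D_i)_{i\in I}$ of non-tautological clauses with $0\notin I$, $\mathcal{M}^{(D_i)_{i\in I}}_u=\langle W',R',V'\rangle$ has $W'=W\times(\{0\}\cup I)$, $(w,i)R'(v,j)$ iff $wRv$, $(w,0)\in V'(p)$ iff $w\in V(p)$, and for $i\in I$: $(w,i)\in V'(p)$ iff $\lnot p\in D_i$, or $\{p,\lnot p\}\cap D_i=\varnothing$ and $w\in V(p)$. Semantics: $\mathcal{M},w\models[\ddagger\pi]\varphi$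 iff for all $D_1\in\mathcal{C}(\pi)$, $D_2\in\mathcal{C}(\lnot\pi)$, $\mathcal{M}^{(D_1,D_2)}_u,(w,0)\models\varphi$ (indexed by $I=\{1,2\}$). Strong forgetting whether: $\mathcal{M},w\models[\ddagger^{\ast}\pi]\varphi$ iff $\mathcal{M}^{\mathcal{C}(\pi)\cup\mathcal{C}(\lnot\pi)}_u,(w,0)\models\varphi$, where the family is the set $\mathcal{C}(\pi)\cup\mathcal{C}(\lnot\pi)$ indexed by itself (one new copy of $W$ per clause). *)

theory Defs
  imports "HOL-Library.Countable"
begin

datatype 'a pf = PTop | PAt 'a | PNeg "'a pf" | PConj "'a pf" "'a pf"

fun peval :: "('a \<Rightarrow> bool) \<Rightarrow> 'a pf \<Rightarrow> bool" where
  "peval v PTop = True"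
| "peval v (PAt p) = v p"
| "peval v (PNeg a) = (\<not> peval v a)"
| "peval v (PConj a b) = (peval v a \<and> peval v b)"

text \<open>A literal is a pair (p, b): (p, True) is the atom p, (p, False) is its negation.
  A clause is a finite set of literals, read as their disjunction.\<close>

type_synonym 'a clause = "('a \<times> bool) set"

definition tautological :: "'a clause \<Rightarrow> bool" where
  "tautological D \<longleftrightarrow> (\<exists>p. (p, True) \<in> D \<and> (p, False) \<in> D)"

definition entails_clause :: "'a pf \<Rightarrow> 'a clause \<Rightarrow> bool" where
  "entails_clause \<pi> D \<longleftrightarrow> (\<forall>v. peval v \<pi> \<longrightarrow> (\<exists>(p, b) \<in> D. v p = b))"

definition Cl_set :: "'a pf \<Rightarrow> 'a clause set" where
  "Cl_set \<pi> = {D. finite D \<and> \<not> tautological D \<and> entails_clause \<pi> D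
                 \<and> (\<forall>D'. D' \<subset> D \<longrightarrow> \<not> entails_clause \<pi> D')}"

datatype 'a fm = Top | At 'a | Neg "'a fm" | Conj "'a fm" "'a fm" | Box "'a fm"
  | Forget "'a pf" "'a fm"
  | ForgetS "'a pf" "'a fm"

record ('a, 'w) model =
  W :: "'w set"
  R :: "('w \<times> 'w) set"
  V :: "'a \<Rightarrow> 'w set"

definition is_model :: "('a, 'w) model \<Rightarrow> bool" where
  "is_model M \<longleftrightarrow> W M \<noteq> {} \<and> R M \<subseteq> W M \<times> W M \<and> (\<forall>p. V M p \<subseteq> W M)"

definition serial :: "('a, 'w) model \<Rightarrow> bool" where
  "serial M \<longleftrightarrow> (\<forall>w \<in> W M. \<exists>v. (w, v) \<in> R M)"

text \<open>Indices of copies: Zero is the index 0 (original copy); Num n and Cl D are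
  the indices used for the families of [\<ddagger>pi] (indexed by {1,2}) and [\<ddagger>* pi]
  (indexed by the clauses themselves). To allow iterated updates inside one HOL type,
  worlds of updated models are pairs (w, xs) where xs records the sequence of copy
  indices; an update replaces (w, xs) by (w, xs @ [i]).\<close>

datatype 'a idx = Zero | Num nat | Cl "'a clause"

type_synonym ('a, 'w) umodel = "('a, 'w \<times> 'a idx list) model"

text \<open>The update M^{(D_i)_{i \<in> I}}_u, for an index set I not containing Zero.\<close>
definition upd :: "('a, 'w) umodel \<Rightarrow> 'a idx set \<Rightarrow> ('a idx \<Rightarrow> 'a clause) \<Rightarrow> ('a, 'w) umodel" where
  "upd M I D =
    \<lparr> W = {(w, xs @ [i]) | w xs i. (w, xs) \<in> W M \<and> i \<in> insert Zero I},
      R = {((w, xs @ [i]), (v, ys @ [j])) | w xs i v ys j.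
              ((w, xs), (v, ys)) \<in> R M \<and> i \<in> insert Zero I \<and> j \<in> insert Zero I},
      V = (\<lambda>p. {(w, xs @ [Zero]) | w xs. (w, xs) \<in> V M p}
             \<union> {(w, xs @ [i]) | w xs i. (w, xs) \<in> W M \<and> i \<in> I \<and>
                   ((p, False) \<in> D i \<or>
                    ((p, True) \<notin> D i \<and> (p, False) \<notin> D i \<and> (w, xs) \<in> V M p))}) \<rparr>"

fun sat :: "('a, 'w) umodel \<Rightarrow> 'w \<times> 'a idx list \<Rightarrow> 'a fm \<Rightarrow> bool" where
  "sat M x Top = True"
| "sat M x (At p) = (x \<in> V M p)"
| "sat M x (Neg \<phi>) = (\<not> sat M x \<phi>)"
| "sat M x (Conj \<phi> \<psi>) = (sat M x \<phi> \<and> sat M x \<psi>)"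
| "sat M x (Box \<phi>) = (\<forall>y. (x, y) \<in> R M \<longrightarrow> sat M y \<phi>)"
| "sat M x (Forget \<pi> \<phi>) =
     (\<forall>D1 \<in> Cl_set \<pi>. \<forall>D2 \<in> Cl_set (PNeg \<pi>).
        sat (upd M {Num 1, Num 2} (\<lambda>i. if i = Num 1 then D1 else D2)) (fst x, snd x @ [Zero]) \<phi>)"
| "sat M x (ForgetS \<pi> \<phi>) =
     sat (upd M (Cl ` (Cl_set \<pi> \<union> Cl_set (PNeg \<pi>))) (\<lambda>i. case i of Cl D \<Rightarrow> D | _ \<Rightarrow> {}))
         (fst x, snd x @ [Zero]) \<phi>"

definition lift :: "('a, 'w) model \<Rightarrow> ('a, 'w) umodel" where
  "lift M = \<lparr> W = {(w, []) | w. w \<in> W M},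
              R = {((w, []), (v, [])) | w v. (w, v) \<in> R M},
              V = (\<lambda>p. {(w, []) | w. w \<in> V M p}) \<rparr>"

definition holds_at :: "('a, 'w) model \<Rightarrow> 'w \<Rightarrow> 'a fm \<Rightarrow> bool" where
  "holds_at M w \<phi> \<longleftrightarrow> sat (lift M) (w, []) \<phi>"

definition serial_valid :: "'w itself \<Rightarrow> 'a fm \<Rightarrow> bool" where
  "serial_valid _ \<phi> \<longleftrightarrow> (\<forall>M :: ('a, 'w) model. is_model M \<and> serial M \<longrightarrow> (\<forall>w \<in> W M. holds_at M w \<phi>))"

end

theory Submission
  imports Defs
begin

text \<open>For the strong operator the family contains the unit clauses p and q (minimal consequences
  of p \<and> q), each with its own copy of the model in which that atom is false; a successor v of w
  exists by seriality, and its two copies falsify p resp. q, so neither p nor q is necessary at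
  (w, 0). The ordinary operator only uses one clause of each of \<C>(p \<and> q) and \<C>(\<not>(p \<and> q)) at a time:
  with the unit clause p and the clause \<not>p \<or> \<not>q, no copy of a model in which q holds everywhere
  falsifies q, so on a reflexive point where p and q hold, q stays necessary.\<close>

lemma entails_clause_mono: "entails_clause \<pi> D \<Longrightarrow> D \<subseteq> D' \<Longrightarrow> entails_clause \<pi> D'"
  unfolding entails_clause_def by blast

lemma unit_clause_in_Cl_set:
  assumes "entails_clause \<pi> {l}" and "peval v \<pi>"
  shows "{l} \<in> Cl_set \<pi>"
proof -
  have "\<not> entails_clause \<pi> {}"
    using assms(2) unfolding entails_clause_def by blast
  moreover have "D' \<subset> {l} \<Longrightarrow> D' = {}" for D' by blast
  ultimately show ?thesis
    using assms(1) unfolding Cl_set_def tautological_def by (cases l) auto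
qed

lemma Cl_set_PConj_PAt:
  "{(p, True)} \<in> Cl_set (PConj (PAt p) (PAt q))"
  "{(q, True)} \<in> Cl_set (PConj (PAt p) (PAt q))"
  by (rule unit_clause_in_Cl_set[where v = "\<lambda>_. True"]; simp add: entails_clause_def)+

lemma Cl_set_PNeg_PConj_PAt:
  assumes "p \<noteq> q"
  shows "{(p, False), (q, False)} \<in> Cl_set (PNeg (PConj (PAt p) (PAt q)))"
proof -
  let ?\<pi> = "PNeg (PConj (PAt p) (PAt q))"
  have "\<not> entails_clause ?\<pi> {(p, False)}"
    unfolding entails_clause_def using assms by (auto intro!: exI[of _ "\<lambda>x. x = p"])
  moreover have "\<not> entails_clause ?\<pi> {(q, False)}"
    unfolding entails_clause_def using assms by (auto intro!: exI[of _ "\<lambda>x. x = q"])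
  moreover have "D' \<subset> {(p, False), (q, False)} \<Longrightarrow> D' \<subseteq> {(p, False)} \<or> D' \<subseteq> {(q, False)}" for D'
    by blast
  ultimately have "\<forall>D'. D' \<subset> {(p, False), (q, False)} \<longrightarrow> \<not> entails_clause ?\<pi> D'"
    using entails_clause_mono by metis
  moreover have "entails_clause ?\<pi> {(p, False), (q, False)}"
    unfolding entails_clause_def by auto
  ultimately show ?thesis
    unfolding Cl_set_def tautological_def by auto
qed

lemma is_model_lift: "is_model M \<Longrightarrow> is_model (lift M)"
  unfolding is_model_def lift_def by auto

lemma is_model_upd: "is_model M \<Longrightarrow> is_model (upd M I D)"
  unfolding is_model_def upd_def by fastforce

lemma upd_R_copies:
  assumes "((w, xs), (v, ys)) \<in> R M" and "i \<in> insert Zero I" and "j \<in> insert Zero I"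
  shows "((w, xs @ [i]), (v, ys @ [j])) \<in> R (upd M I D)"
  using assms unfolding upd_def by auto

lemma upd_copy_falsifies_positive_literal:
  assumes "i \<noteq> Zero" and "(a, True) \<in> D i" and "\<not> tautological (D i)"
  shows "(w, xs @ [i]) \<notin> V (upd M I D) a"
  using assms unfolding upd_def tautological_def by auto

lemma upd_preserves_valid_atom:
  assumes "W M \<subseteq> V M a" and "\<forall>i\<in>I. (a, True) \<notin> D i"
  shows "W (upd M I D) \<subseteq> V (upd M I D) a"
  using assms unfolding upd_def by auto

lemma sat_upd_Box_valid_atom:
  assumes "is_model M" and "W M \<subseteq> V M a" and "\<forall>i\<in>I. (a, True) \<notin> D i"
  shows "sat (upd M I D) x (Box (At a))"
  using is_model_upd[OF assms(1), of I D] upd_preserves_valid_atom[OF assms(2,3)]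
  unfolding is_model_def by auto

lemma sat_strong_upd_Neg_Box_unit_clause:
  fixes \<pi> :: "'a pf"
  defines "I \<equiv> Cl ` (Cl_set \<pi> \<union> Cl_set (PNeg \<pi>))"
    and "D \<equiv> \<lambda>i. case i of Cl C \<Rightarrow> C | _ \<Rightarrow> {}"
  assumes "{(a, True)} \<in> Cl_set \<pi> \<union> Cl_set (PNeg \<pi>)" and "((w, xs), (v, ys)) \<in> R M"
  shows "sat (upd M I D) (w, xs @ [Zero]) (Neg (Box (At a)))"
proof -
  have "((w, xs @ [Zero]), (v, ys @ [Cl {(a, True)}])) \<in> R (upd M I D)"
    using assms(3,4) unfolding I_def by (intro upd_R_copies) auto
  moreover have "(v, ys @ [Cl {(a, True)}]) \<notin> V (upd M I D) a"
    by (rule upd_copy_falsifies_positive_literal) (auto simp: D_def tautological_def)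
  ultimately show ?thesis by auto
qed

theorem proposition8:
  fixes p q :: "'a::countable"
  assumes "p \<noteq> q"
  shows "serial_valid TYPE('w)
           (ForgetS (PConj (PAt p) (PAt q)) (Conj (Neg (Box (At p))) (Neg (Box (At q)))))
       \<and> \<not> serial_valid TYPE('w)
           (Forget (PConj (PAt p) (PAt q)) (Conj (Neg (Box (At p))) (Neg (Box (At q)))))"
proof
  show "serial_valid TYPE('w)
          (ForgetS (PConj (PAt p) (PAt q)) (Conj (Neg (Box (At p))) (Neg (Box (At q)))))"
    unfolding serial_valid_def holds_at_def
  proof (intro allI impI ballI)
    fix M :: "('a, 'w) model" and w
    assume "is_model M \<and> serial M" and "w \<in> W M"
    then obtain v where "(w, v) \<in> R M" unfolding serial_def by blast
    then have successor: "((w, []), (v, [])) \<in> R (lift M)" unfolding lift_def by auto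
    show "sat (lift M) (w, [])
                 (ForgetS (PConj (PAt p) (PAt q)) (Conj (Neg (Box (At p))) (Neg (Box (At q)))))"
      using sat_strong_upd_Neg_Box_unit_clause[OF UnI1[OF Cl_set_PConj_PAt(1)] successor]
        sat_strong_upd_Neg_Box_unit_clause[OF UnI1[OF Cl_set_PConj_PAt(2)] successor]
      by simp
  qed
next
  fix w0 :: 'w
  define M :: "('a, 'w) model" where "M = \<lparr>W = {w0}, R = {(w0, w0)}, V = (\<lambda>_. {w0})\<rparr>"
  have M: "is_model M" "serial M" "w0 \<in> W M"
    unfolding M_def is_model_def serial_def by auto
  let ?D = "\<lambda>i. if i = Num 1 then {(p, True)} else {(p, False), (q, False)}"
  have "sat (upd (lift M) {Num 1, Num 2} ?D) (w0, [Zero]) (Box (At q))"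
    using assms M(1)
    by (intro sat_upd_Box_valid_atom is_model_lift) (auto simp: M_def lift_def)
  then have "\<not> holds_at M w0
               (Forget (PConj (PAt p) (PAt q)) (Conj (Neg (Box (At p))) (Neg (Box (At q)))))"
    unfolding holds_at_def
    using Cl_set_PConj_PAt(1) Cl_set_PNeg_PConj_PAt[OF assms] by fastforce
  then show "\<not> serial_valid TYPE('w)
               (Forget (PConj (PAt p) (PAt q)) (Conj (Neg (Box (At p))) (Neg (Box (At q)))))"
    using M unfolding serial_valid_def by blast
qed

end
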